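(* Let $\mathcal{G}=(\mathcal{V},\mathcal{E})$ be an endotactic reaction network. Then there exists a source-only reaction network $\tilde{\mathcal{G}}=(\tilde{\mathcal{V}},\tilde{\mathcal{E}})$ such that $\mathcal{G}\sqsubseteq\tilde{\mathcal{G}}$ and the nodes of $\tilde{\mathcal{G}}$ are exactly the source nodes of $\mathcal{G}$. Therefore, every endotactic network is effectively source-only.
   Context: A reaction network (E-graph) $\mathcal{G}=(\mathcal{V},\mathcal{E})$ is a finite directed graph whose nodes are distinct elements of a finite set $Y\subset\mathbb{R}^d_{\ge 0}$, with $\mathcal{V}\neq\emptyset$, every node incident to at least one edge, and no edge from a node to itself. For an edge $e$, $\mathbf{s}(e)$ is its source node, $\mathbf{t}(e)$ its target, $\mathbf{v}(e)=\mathbf{t}(e)-\mathbf{s}(e)$. Given positive rate constants $\mathcal{K}=(k_e)$, $\mathcal{G}$ generates the system $\frac{d\mathbf{x}}{dt}=\mathbf{f}_{\mathcal{G}(\mathcal{K})}(\mathbf{x})=\sum_{e}k_e\mathbf{x}^{\mathbf{s}(e)}\mathbf{v}(e)$ ($\mathbf{x}^{\mathbf{y}}=\prod_i x_i^{y_i}$, $0^0=1$). $\mathcal{G}\sqsubseteq\tilde{\mathcal{G}}$ means: for every positive rate constants $\mathcal{K}$ for $\mathcal{G}$ there exist positive rate constants $\tilde{\mathcal{K}}$ for $\tilde{\mathcal{G}}$ with $\mathbf{f}_{\tilde{\mathcal{G}}(\tilde{\mathcal{K}})}=\mathbf{f}_{\mathcal{G}(\mathcal{K})}$ identically. $\mathcal{G}$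 is endotactic if for every $\mathbf{w}\in\mathbb{R}^d$ and $e_i\in\mathcal{E}$ with $\mathbf{w}\cdot\mathbf{v}(e_i)<0$ there exists $e_j\in\mathcal{E}$ with $\mathbf{w}\cdot(\mathbf{s}(e_j)-\mathbf{s}(e_i))<0$ and $\mathbf{w}\cdot\mathbf{v}(e_j)>0$. A network is source-only if every node that is the target of some edge is also the source of some edge. A polynomial dynamical system is source-only if it is generated (for some positive rate constants) by some source-only network; a network is effectively source-only if every system it generates is source-only. *)

theory Defs
  imports "HOL-Analysis.Analysis"
begin

text \<open>Complexes (nodes) are vectors in real^'d (d = CARD('d)). A reaction network is represented by its finite edge set; its
  node set is the set of all endpoints of edges (every node is incident to an edge).\<close>

type_synonym 'd edge = "(real ^ 'd) \<times> (real ^ 'd)"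

definition src :: "'d edge \<Rightarrow> real ^ 'd" where "src e = fst e"
definition tgt :: "'d edge \<Rightarrow> real ^ 'd" where "tgt e = snd e"
definition rvec :: "'d edge \<Rightarrow> real ^ 'd" where "rvec e = tgt e - src e"

definition nodes :: "'d edge set \<Rightarrow> (real ^ 'd) set" where
  "nodes E = src ` E \<union> tgt ` E"

definition reaction_network :: "('d::finite) edge set \<Rightarrow> bool" where
  "reaction_network E \<longleftrightarrow> finite E \<and> E \<noteq> {} \<and>
     (\<forall>e\<in>E. src e \<noteq> tgt e) \<and>
     (\<forall>y\<in>nodes E. \<forall>i. y $ i \<ge> 0)"

text \<open>Monomial x^y = prod_i x_i^{y_i} with the convention 0^0 = 1 (for x >= 0).\<close>
definition monom :: "real ^ ('d::finite) \<Rightarrow> real ^ 'd \<Rightarrow> real" where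
  "monom x y = (\<Prod>i\<in>UNIV. if y $ i = 0 then 1 else x $ i powr y $ i)"

definition pos_rates :: "'d edge set \<Rightarrow> ('d edge \<Rightarrow> real) \<Rightarrow> bool" where
  "pos_rates E K \<longleftrightarrow> (\<forall>e\<in>E. K e > 0)"

definition gen_sys :: "('d::finite) edge set \<Rightarrow> ('d edge \<Rightarrow> real) \<Rightarrow> real ^ 'd \<Rightarrow> real ^ 'd" where
  "gen_sys E K x = (\<Sum>e\<in>E. (K e * monom x (src e)) *\<^sub>R rvec e)"

definition same_sys :: "(real ^ ('d::finite) \<Rightarrow> real ^ 'd) \<Rightarrow> (real ^ 'd \<Rightarrow> real ^ 'd) \<Rightarrow> bool" where
  "same_sys f g \<longleftrightarrow> (\<forall>x. (\<forall>i. x $ i \<ge> 0) \<longrightarrow> f x = g x)"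

definition realizable_sub :: "('d::finite) edge set \<Rightarrow> 'd edge set \<Rightarrow> bool" (infix "\<sqsubseteq>\<^sub>R" 50) where
  "E \<sqsubseteq>\<^sub>R E' \<longleftrightarrow> (\<forall>K. pos_rates E K \<longrightarrow>
      (\<exists>K'. pos_rates E' K' \<and> same_sys (gen_sys E' K') (gen_sys E K)))"

definition endotactic :: "('d::finite) edge set \<Rightarrow> bool" where
  "endotactic E \<longleftrightarrow> (\<forall>w::real^'d. \<forall>ei\<in>E. w \<bullet> rvec ei < 0 \<longrightarrow>
      (\<exists>ej\<in>E. w \<bullet> (src ej - src ei) < 0 \<and> w \<bullet> rvec ej > 0))"

definition source_only :: "('d::finite) edge set \<Rightarrow> bool" where
  "source_only E \<longleftrightarrow> tgt ` E \<subseteq> src ` E"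

definition source_only_sys :: "(real ^ ('d::finite) \<Rightarrow> real ^ 'd) \<Rightarrow> bool" where
  "source_only_sys f \<longleftrightarrow> (\<exists>E K. reaction_network E \<and> source_only E \<and> pos_rates E K \<and>
      same_sys (gen_sys E K) f)"

definition eff_source_only :: "('d::finite) edge set \<Rightarrow> bool" where
  "eff_source_only E \<longleftrightarrow> (\<forall>K. pos_rates E K \<longrightarrow> source_only_sys (gen_sys E K))"

end

theory Submission imports Defs begin

text \<open>Endotacticity forces every reaction vector \<open>rvec e\<close> into the convex cone spanned
  by the differences \<open>z - src e\<close>, \<open>z\<close> a source node: otherwise a separating functional
  \<open>w\<close> would satisfy \<open>w \<bullet> rvec e < 0\<close> while no source node lies strictly below \<open>src e\<close> in
  direction \<open>w\<close>. Writing \<open>rvec e = (\<Sum>z. c e z *\<^sub>R (z - src e))\<close> with \<open>c e z \<ge> 0\<close>, the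
  reaction \<open>e\<close> with rate \<open>k\<close> generates the same vector field as the reactions
  \<open>src e \<rightarrow> z\<close> with rates \<open>k * c e z\<close>. Collecting these reactions over all \<open>e\<close> gives a
  network whose nodes are the source nodes of the original one, so it is source-only
  and realizes every system of the original network.\<close>

lemma separating_hyperplane_closed_cone_point:
  fixes C :: "'a::euclidean_space set"
  assumes "convex_cone C" and "closed C" and "v \<notin> C"
  shows "\<exists>a. a \<bullet> v < 0 \<and> (\<forall>x\<in>C. 0 \<le> a \<bullet> x)"
proof -
  obtain a b where av: "a \<bullet> v < b" and aC: "\<forall>x\<in>C. b < a \<bullet> x"
    using separating_hyperplane_closed_point assms convex_cone_def by metis
  have "b < 0"
    using aC \<open>convex_cone C\<close> convex_cone_contains_0 by fastforce
  have "0 \<le> a \<bullet> x" if "x \<in> C" for x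
  proof (rule ccontr)
    assume "\<not> 0 \<le> a \<bullet> x"
    then have "(b / (a \<bullet> x)) *\<^sub>R x \<in> C"
      using \<open>b < 0\<close> \<open>x \<in> C\<close> \<open>convex_cone C\<close>
      by (simp add: convex_cone_def conic_def divide_nonpos_neg)
    moreover have "a \<bullet> ((b / (a \<bullet> x)) *\<^sub>R x) = b"
      using \<open>\<not> 0 \<le> a \<bullet> x\<close> by simp
    ultimately show False
      using aC by fastforce
  qed
  with av \<open>b < 0\<close> show ?thesis
    by (intro exI[of _ a]) auto
qed

lemma convex_cone_hull_image_finite_nonneg_combination:
  fixes f :: "'b \<Rightarrow> 'a::real_vector"
  assumes "finite Z" and "v \<in> convex_cone hull (f ` Z)"
  shows "\<exists>u. (\<forall>z\<in>Z. 0 \<le> u z) \<and> v = (\<Sum>z\<in>Z. u z *\<^sub>R f z)"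
proof -
  let ?combs = "{v. \<exists>u. (\<forall>z\<in>Z. 0 \<le> u z) \<and> v = (\<Sum>z\<in>Z. u z *\<^sub>R f z)}"
  have "convex_cone hull (f ` Z) \<subseteq> ?combs"
  proof (rule hull_minimal)
    show "f ` Z \<subseteq> ?combs"
    proof (rule image_subsetI)
      fix z assume "z \<in> Z"
      have "(\<Sum>w\<in>Z. (if w = z then 1 else 0) *\<^sub>R f w) = (\<Sum>w\<in>Z. if w = z then f w else 0)"
        by (rule sum.cong) auto
      also have "\<dots> = f z"
        using \<open>z \<in> Z\<close> \<open>finite Z\<close> by (simp add: sum.delta)
      finally have "f z = (\<Sum>w\<in>Z. (if w = z then 1 else 0) *\<^sub>R f w)" ..
      then show "f z \<in> ?combs"
        by (intro CollectI exI[of _ "\<lambda>w. if w = z then 1 else 0"]) simp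
    qed
    show "convex_cone ?combs"
      unfolding convex_cone_iff
    proof safe
      show "\<exists>u. (\<forall>z\<in>Z. 0 \<le> u z) \<and> 0 = (\<Sum>z\<in>Z. u z *\<^sub>R f z)"
        by (rule exI[of _ "\<lambda>_. 0"]) simp
    next
      fix u1 u2 :: "'b \<Rightarrow> real" assume "\<forall>z\<in>Z. 0 \<le> u1 z" "\<forall>z\<in>Z. 0 \<le> u2 z"
      then show "\<exists>u. (\<forall>z\<in>Z. 0 \<le> u z) \<and>
          (\<Sum>z\<in>Z. u1 z *\<^sub>R f z) + (\<Sum>z\<in>Z. u2 z *\<^sub>R f z) = (\<Sum>z\<in>Z. u z *\<^sub>R f z)"
        by (intro exI[of _ "\<lambda>z. u1 z + u2 z"]) (simp add: scaleR_add_left sum.distrib)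
    next
      fix u :: "'b \<Rightarrow> real" and c :: real assume "\<forall>z\<in>Z. 0 \<le> u z" "0 \<le> c"
      then show "\<exists>u'. (\<forall>z\<in>Z. 0 \<le> u' z) \<and>
          c *\<^sub>R (\<Sum>z\<in>Z. u z *\<^sub>R f z) = (\<Sum>z\<in>Z. u' z *\<^sub>R f z)"
        by (intro exI[of _ "\<lambda>z. c * u z"]) (simp add: scaleR_sum_right)
    qed
  qed
  with assms(2) show ?thesis by blast
qed

lemma nonzero_conic_combination_pos_coeff:
  fixes y :: "'a::real_vector"
  assumes "(\<Sum>z\<in>Z. u z *\<^sub>R (z - y)) \<noteq> 0" and "\<forall>z\<in>Z. 0 \<le> u z"
  shows "\<exists>z\<in>Z. z \<noteq> y \<and> 0 < u z"
proof (rule ccontr)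
  assume "\<not> ?thesis"
  with assms(2) have "\<forall>z\<in>Z. u z *\<^sub>R (z - y) = 0"
    by (metis order.not_eq_order_implies_strict diff_self scaleR_eq_0_iff)
  then have "(\<Sum>z\<in>Z. u z *\<^sub>R (z - y)) = 0"
    by (rule sum.neutral)
  with assms(1) show False ..
qed

lemma endotactic_rvec_in_convex_cone:
  fixes E :: "('d::finite) edge set"
  assumes "finite E" and "endotactic E" and "e \<in> E"
  shows "rvec e \<in> convex_cone hull ((\<lambda>z. z - src e) ` src ` E)"
proof (rule ccontr)
  let ?C = "convex_cone hull ((\<lambda>z. z - src e) ` src ` E)"
  assume "rvec e \<notin> ?C"
  moreover have "closed ?C"
    using \<open>finite E\<close> by (simp add: closed_convex_cone_hull)
  ultimately obtain w where w: "w \<bullet> rvec e < 0" and wC: "\<forall>x\<in>?C. 0 \<le> w \<bullet> x"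
    using separating_hyperplane_closed_cone_point convex_cone_convex_cone_hull by blast
  obtain ej where "ej \<in> E" and "w \<bullet> (src ej - src e) < 0"
    using \<open>endotactic E\<close> \<open>e \<in> E\<close> w unfolding endotactic_def by blast
  moreover have "src ej - src e \<in> ?C"
    using \<open>ej \<in> E\<close> by (intro hull_inc) blast
  ultimately show False
    using wC by fastforce
qed

lemma endotactic_rvec_nonneg_combination:
  fixes E :: "('d::finite) edge set"
  assumes "finite E" and "endotactic E" and "e \<in> E"
  shows "\<exists>u. (\<forall>z\<in>src ` E. 0 \<le> u z) \<and> rvec e = (\<Sum>z\<in>src ` E. u z *\<^sub>R (z - src e))"
  using assms by (intro convex_cone_hull_image_finite_nonneg_combination
      endotactic_rvec_in_convex_cone) simp_all

definition rewired :: "'d edge set \<Rightarrow> (real ^ 'd) set \<Rightarrow> ('d edge \<Rightarrow> real ^ 'd \<Rightarrow> real) \<Rightarrow> 'd edge set"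
  where "rewired E Z c = {(src e, z) | e z. e \<in> E \<and> z \<in> Z \<and> z \<noteq> src e \<and> 0 < c e z}"

definition rewired_rates ::
    "'d edge set \<Rightarrow> ('d edge \<Rightarrow> real ^ 'd \<Rightarrow> real) \<Rightarrow> ('d edge \<Rightarrow> real) \<Rightarrow> 'd edge \<Rightarrow> real"
  where "rewired_rates E c K p = (\<Sum>e\<in>E. if src e = src p then K e * c e (tgt p) else 0)"

lemma rewired_subset: "rewired E Z c \<subseteq> src ` E \<times> Z"
  by (auto simp: rewired_def)

lemma finite_rewired: "finite E \<Longrightarrow> finite Z \<Longrightarrow> finite (rewired E Z c)"
  using rewired_subset by (metis finite_SigmaI finite_imageI finite_subset)

lemma tgt_rewired_subset: "tgt ` rewired E Z c \<subseteq> Z"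
  using rewired_subset by (fastforce simp: tgt_def)

lemma src_rewired:
  assumes "\<forall>e\<in>E. src e \<noteq> tgt e" and "\<forall>e\<in>E. \<forall>z\<in>Z. 0 \<le> c e z"
    and "\<forall>e\<in>E. rvec e = (\<Sum>z\<in>Z. c e z *\<^sub>R (z - src e))"
  shows "src ` rewired E Z c = src ` E"
proof
  show "src ` rewired E Z c \<subseteq> src ` E"
    using rewired_subset by (fastforce simp: src_def)
  show "src ` E \<subseteq> src ` rewired E Z c"
  proof
    fix y assume "y \<in> src ` E"
    then obtain e where "y = src e" and "e \<in> E" by blast
    have "rvec e \<noteq> 0"
      using assms(1) \<open>e \<in> E\<close> by (auto simp: rvec_def)
    then obtain z where "z \<in> Z" "z \<noteq> src e" "0 < c e z"
      using nonzero_conic_combination_pos_coeff assms(2,3) \<open>e \<in> E\<close> by metis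
    then have "(y, z) \<in> rewired E Z c"
      using \<open>y = src e\<close> \<open>e \<in> E\<close> unfolding rewired_def by blast
    then show "y \<in> src ` rewired E Z c" by (force simp: src_def)
  qed
qed

lemma no_loops_rewired: "p \<in> rewired E Z c \<Longrightarrow> src p \<noteq> tgt p"
  by (auto simp: rewired_def src_def tgt_def)

lemma pos_rates_rewired:
  assumes "finite E" and "pos_rates E K" and "\<forall>e\<in>E. \<forall>z\<in>Z. 0 \<le> c e z"
  shows "pos_rates (rewired E Z c) (rewired_rates E c K)"
  unfolding pos_rates_def
proof
  fix p assume "p \<in> rewired E Z c"
  then obtain e where e: "e \<in> E" "src e = src p" "tgt p \<in> Z" "0 < c e (tgt p)"
    by (auto simp: rewired_def src_def tgt_def)
  have "0 < (if src e = src p then K e * c e (tgt p) else 0)"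
    using e assms(2) by (simp add: pos_rates_def)
  also have "\<dots> \<le> rewired_rates E c K p"
    unfolding rewired_rates_def using e assms
    by (intro member_le_sum) (auto simp: pos_rates_def less_imp_le)
  finally show "0 < rewired_rates E c K p" .
qed

lemma gen_sys_rewired:
  assumes "finite E" and "finite Z" and nonneg: "\<forall>e\<in>E. \<forall>z\<in>Z. 0 \<le> c e z"
    and comb: "\<forall>e\<in>E. rvec e = (\<Sum>z\<in>Z. c e z *\<^sub>R (z - src e))"
  shows "gen_sys (rewired E Z c) (rewired_rates E c K) x = gen_sys E K x"
proof -
  let ?E' = "rewired E Z c"
  define g where "g e p = (if src e = src p
      then (K e * monom x (src e) * c e (tgt p)) *\<^sub>R (tgt p - src e) else 0)" for e p
  have per_edge: "(\<Sum>p\<in>?E'. g e p) = (K e * monom x (src e)) *\<^sub>R rvec e" if "e \<in> E" for e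
  proof -
    have "(\<Sum>p\<in>?E'. g e p) = (\<Sum>p\<in>Pair (src e) ` Z. g e p)"
    proof (rule sum.mono_neutral_cong)
      show "g e p = 0" if missing: "p \<in> Pair (src e) ` Z - ?E'" for p
      proof -
        obtain z where p: "p = (src e, z)" "z \<in> Z" "p \<notin> ?E'"
          using missing by blast
        then have "\<not> (z \<noteq> src e \<and> 0 < c e z)"
          using \<open>e \<in> E\<close> unfolding rewired_def by blast
        then have "z = src e \<or> c e z = 0"
          using nonneg \<open>e \<in> E\<close> \<open>z \<in> Z\<close> by force
        then show ?thesis
          using p by (auto simp: g_def src_def tgt_def)
      qed
      show "g e p = 0" if "p \<in> ?E' - Pair (src e) ` Z" for p
        using that by (auto simp: g_def rewired_def src_def)
    qed (use assms finite_rewired in auto)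
    also have "\<dots> = (\<Sum>z\<in>Z. g e (src e, z))"
      by (simp add: sum.reindex inj_on_def)
    also have "\<dots> = (\<Sum>z\<in>Z. (K e * monom x (src e)) *\<^sub>R (c e z *\<^sub>R (z - src e)))"
      by (simp add: g_def src_def tgt_def)
    also have "\<dots> = (K e * monom x (src e)) *\<^sub>R rvec e"
      using comb \<open>e \<in> E\<close> by (simp add: scaleR_sum_right)
    finally show ?thesis .
  qed
  have "gen_sys ?E' (rewired_rates E c K) x = (\<Sum>p\<in>?E'. \<Sum>e\<in>E. g e p)"
    unfolding gen_sys_def rewired_rates_def sum_distrib_right scaleR_sum_left rvec_def
    by (intro sum.cong refl) (simp add: g_def)
  also have "\<dots> = (\<Sum>e\<in>E. \<Sum>p\<in>?E'. g e p)"
    by (rule sum.swap)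
  also have "\<dots> = gen_sys E K x"
    unfolding gen_sys_def using per_edge by simp
  finally show ?thesis .
qed

lemma realizable_sub_rewired:
  assumes "finite E" and "finite Z" and "\<forall>e\<in>E. \<forall>z\<in>Z. 0 \<le> c e z"
    and "\<forall>e\<in>E. rvec e = (\<Sum>z\<in>Z. c e z *\<^sub>R (z - src e))"
  shows "E \<sqsubseteq>\<^sub>R rewired E Z c"
  unfolding realizable_sub_def same_sys_def
proof (intro allI impI)
  fix K assume "pos_rates E K"
  with assms show "\<exists>K'. pos_rates (rewired E Z c) K' \<and>
      (\<forall>x. (\<forall>i. 0 \<le> x $ i) \<longrightarrow> gen_sys (rewired E Z c) K' x = gen_sys E K x)"
    by (intro exI[of _ "rewired_rates E c K"]) (simp add: pos_rates_rewired gen_sys_rewired)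
qed

lemma eff_source_only_if_realizable_sub:
  assumes "reaction_network E'" and "source_only E'" and "E \<sqsubseteq>\<^sub>R E'"
  shows "eff_source_only E"
  unfolding eff_source_only_def source_only_sys_def
proof (intro allI impI)
  fix K assume "pos_rates E K"
  then obtain K' where "pos_rates E' K'" and "same_sys (gen_sys E' K') (gen_sys E K)"
    using \<open>E \<sqsubseteq>\<^sub>R E'\<close> unfolding realizable_sub_def by blast
  with assms(1,2) show "\<exists>F L. reaction_network F \<and> source_only F \<and> pos_rates F L \<and>
      same_sys (gen_sys F L) (gen_sys E K)"
    by blast
qed

lemma rewired_sources_network:
  assumes "reaction_network E"
    and "\<forall>e\<in>E. \<forall>z\<in>src ` E. 0 \<le> c e z"
    and "\<forall>e\<in>E. rvec e = (\<Sum>z\<in>src ` E. c e z *\<^sub>R (z - src e))"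
  shows "reaction_network (rewired E (src ` E) c)" and "source_only (rewired E (src ` E) c)"
    and "nodes (rewired E (src ` E) c) = src ` E"
proof -
  let ?E' = "rewired E (src ` E) c"
  have "finite E" and "E \<noteq> {}" and "\<forall>e\<in>E. src e \<noteq> tgt e"
    and nonneg_nodes: "\<forall>y\<in>nodes E. \<forall>i. 0 \<le> y $ i"
    using \<open>reaction_network E\<close> by (auto simp: reaction_network_def)
  then have src_E': "src ` ?E' = src ` E"
    using assms(2,3) by (intro src_rewired)
  then show "source_only ?E'"
    unfolding source_only_def by (simp add: tgt_rewired_subset)
  show nodes_E': "nodes ?E' = src ` E"
    using src_E' tgt_rewired_subset unfolding nodes_def by blast
  show "reaction_network ?E'"
    unfolding reaction_network_def
  proof (intro conjI)
    show "finite ?E'"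
      using \<open>finite E\<close> by (simp add: finite_rewired)
    show "?E' \<noteq> {}"
      using src_E' \<open>E \<noteq> {}\<close> by auto
    show "\<forall>p\<in>?E'. src p \<noteq> tgt p"
      by (simp add: no_loops_rewired)
    show "\<forall>y\<in>nodes ?E'. \<forall>i. 0 \<le> y $ i"
      using nodes_E' nonneg_nodes by (simp add: nodes_def)
  qed
qed

theorem lemma4:
  fixes E :: "('d::finite) edge set"
  assumes "reaction_network E" and "endotactic E"
  shows "(\<exists>E'. reaction_network E' \<and> source_only E' \<and> E \<sqsubseteq>\<^sub>R E' \<and> nodes E' = src ` E)
         \<and> eff_source_only E"
proof -
  have "finite E"
    using \<open>reaction_network E\<close> by (simp add: reaction_network_def)
  obtain c where c_nonneg: "\<forall>e\<in>E. \<forall>z\<in>src ` E. 0 \<le> c e z"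
    and c_comb: "\<forall>e\<in>E. rvec e = (\<Sum>z\<in>src ` E. c e z *\<^sub>R (z - src e))"
    using endotactic_rvec_nonneg_combination[OF \<open>finite E\<close> \<open>endotactic E\<close>] by metis
  let ?E' = "rewired E (src ` E) c"
  have "E \<sqsubseteq>\<^sub>R ?E'"
    using \<open>finite E\<close> c_nonneg c_comb by (intro realizable_sub_rewired) simp_all
  with rewired_sources_network[OF \<open>reaction_network E\<close> c_nonneg c_comb] show ?thesis
    using eff_source_only_if_realizable_sub by blast
qed

end
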